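(* Let $\{G_i\}$ be a family of connected graphs with common induced subgraph $J$, embedded as $J_i\subseteq G_i$, such that $\{(G_i|J_i)\}$ is isometric, and let $H=\amalg\{(G_i|J_i)\}$. If, for every $i$, every traversal $T_i$ for $\parallel(J_i:G_i)$ contains a local metric basis for $G_i$, then $\dim_l(H)=\sum_i\dim_l(G_i)$.
   Context: $d$ is shortest-path distance (in $H$ unless otherwise stated). A vertex $w$ distinguishes an edge $uv$ if $d(w,u)\neq d(w,v)$. A local metric basis of $G$ is a minimum-size set of vertices such that every edge of $G$ is distinguished (with distances in $G$) by one of them; $\dim_l(G)$ is its size. $J$ is a common induced subgraph of each $G_i$ via injective maps $\iota_i:V(J)\to V(G_i)$ with $\iota_i(x)\iota_i(y)\in E(G_i)$ iff $xy\in E(J)$; $J_i$ is the induced image, $x^i=\iota_i(x)$. $H=\amalg\{(G_i|J_i)\}$ is obtained from the disjoint union of the $G_i$ by identifying, for each $x\in V(J)$, all $x^i$ into one vertex; each $G_i$ is a subgraph of $H$. The family is isometric if $d_{G_i}(a^i,b^i)=d_{G_j}(a^j,b^j)$ for all $i,j$, $a,b\in V(J)$. $\parallel(J_i:G_i)$ is the set of edges $uv$ of $G_i-J_i$ with $d_{G_i}(w,u)=d_{G_i}(w,v)$ for all $w\in V(J_i)$. A traversal for $\parallel(J_i:G_i)$ is a minimum-size set $T_i\subseteq V(G_i-J_i)$ such that every edge of $\parallel(J_i:G_i)$ is distinguished (distances in $H$) by some vertex of $T_i$. *)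

theory Defs
  imports Main "HOL-Library.Extended_Nat"
begin

text \<open>A (finite simple) graph is a pair (V, E) with E a symmetric irreflexive
  relation on V; the edge uv is represented by the pairs (u,v) and (v,u).\<close>

type_synonym 'v graph = "'v set \<times> ('v \<times> 'v) set"

definition verts :: "'v graph \<Rightarrow> 'v set" where "verts G = fst G"
definition edges :: "'v graph \<Rightarrow> ('v \<times> 'v) set" where "edges G = snd G"

definition wf_graph :: "'v graph \<Rightarrow> bool" where
  "wf_graph G \<longleftrightarrow> finite (verts G) \<and> edges G \<subseteq> verts G \<times> verts G
     \<and> sym (edges G) \<and> irrefl (edges G)"

definition walk :: "'v graph \<Rightarrow> 'v list \<Rightarrow> bool" where
  "walk G xs \<longleftrightarrow> xs \<noteq> [] \<and> set xs \<subseteq> verts G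
     \<and> (\<forall>k. Suc k < length xs \<longrightarrow> (xs ! k, xs ! Suc k) \<in> edges G)"

text \<open>Shortest-path distance; \<infinity> if no walk exists.\<close>
definition dist :: "'v graph \<Rightarrow> 'v \<Rightarrow> 'v \<Rightarrow> enat" where
  "dist G u v = (INF xs \<in> {xs. walk G xs \<and> hd xs = u \<and> last xs = v}. enat (length xs - 1))"

definition connected_graph :: "'v graph \<Rightarrow> bool" where
  "connected_graph G \<longleftrightarrow> verts G \<noteq> {} \<and>
     (\<forall>u\<in>verts G. \<forall>v\<in>verts G. \<exists>xs. walk G xs \<and> hd xs = u \<and> last xs = v)"

definition edge_resolving :: "'v graph \<Rightarrow> 'v set \<Rightarrow> bool" where
  "edge_resolving G S \<longleftrightarrow> S \<subseteq> verts G \<and>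
     (\<forall>(u,v)\<in>edges G. \<exists>w\<in>S. dist G w u \<noteq> dist G w v)"

definition local_metric_basis :: "'v graph \<Rightarrow> 'v set \<Rightarrow> bool" where
  "local_metric_basis G S \<longleftrightarrow> edge_resolving G S \<and>
     (\<forall>S'. edge_resolving G S' \<longrightarrow> card S \<le> card S')"

definition local_dim :: "'v graph \<Rightarrow> nat" where
  "local_dim G = (LEAST k. \<exists>S. edge_resolving G S \<and> card S = k)"

text \<open>Amalgamation H of the family (G_i | J_i) over index set I, where J is the
  common induced subgraph and \<iota> i embeds J into G i.  Vertices of H:
  Inl x for x a vertex of J (all copies x^i identified), Inr (i,v) for a
  vertex v of G i outside J_i.  emb i maps G i into H.\<close>

definition emb :: "'j graph \<Rightarrow> ('i \<Rightarrow> 'j \<Rightarrow> 'v) \<Rightarrow> 'i \<Rightarrow> 'v \<Rightarrow> 'j + ('i \<times> 'v)" where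
  "emb J \<iota> i v = (if v \<in> \<iota> i ` verts J then Inl (inv_into (verts J) (\<iota> i) v) else Inr (i, v))"

definition amalg :: "'i set \<Rightarrow> ('i \<Rightarrow> 'v graph) \<Rightarrow> 'j graph \<Rightarrow> ('i \<Rightarrow> 'j \<Rightarrow> 'v)
    \<Rightarrow> ('j + ('i \<times> 'v)) graph" where
  "amalg I G J \<iota> = ((\<Union>i\<in>I. emb J \<iota> i ` verts (G i)),
     (\<Union>i\<in>I. (\<lambda>(u,v). (emb J \<iota> i u, emb J \<iota> i v)) ` edges (G i)))"

definition induced_embedding :: "'j graph \<Rightarrow> 'v graph \<Rightarrow> ('j \<Rightarrow> 'v) \<Rightarrow> bool" where
  "induced_embedding J G f \<longleftrightarrow> inj_on f (verts J) \<and> f ` verts J \<subseteq> verts G \<and>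
     (\<forall>x\<in>verts J. \<forall>y\<in>verts J. (f x, f y) \<in> edges G \<longleftrightarrow> (x, y) \<in> edges J)"

definition isometric_family :: "'i set \<Rightarrow> ('i \<Rightarrow> 'v graph) \<Rightarrow> 'j graph \<Rightarrow> ('i \<Rightarrow> 'j \<Rightarrow> 'v) \<Rightarrow> bool" where
  "isometric_family I G J \<iota> \<longleftrightarrow> (\<forall>i\<in>I. \<forall>k\<in>I. \<forall>a\<in>verts J. \<forall>b\<in>verts J.
      dist (G i) (\<iota> i a) (\<iota> i b) = dist (G k) (\<iota> k a) (\<iota> k b))"

definition parallel_edges :: "'v graph \<Rightarrow> 'v set \<Rightarrow> ('v \<times> 'v) set" where
  "parallel_edges Gi Ji = {(u,v) \<in> edges Gi. u \<notin> Ji \<and> v \<notin> Ji \<and>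
      (\<forall>w\<in>Ji. dist Gi w u = dist Gi w v)}"

definition par_resolving :: "'i set \<Rightarrow> ('i \<Rightarrow> 'v graph) \<Rightarrow> 'j graph \<Rightarrow> ('i \<Rightarrow> 'j \<Rightarrow> 'v)
    \<Rightarrow> 'i \<Rightarrow> 'v set \<Rightarrow> bool" where
  "par_resolving I G J \<iota> i T \<longleftrightarrow> T \<subseteq> verts (G i) - \<iota> i ` verts J \<and>
     (\<forall>(u,v)\<in>parallel_edges (G i) (\<iota> i ` verts J). \<exists>w\<in>T.
        dist (amalg I G J \<iota>) (emb J \<iota> i w) (emb J \<iota> i u) \<noteq>
        dist (amalg I G J \<iota>) (emb J \<iota> i w) (emb J \<iota> i v))"

definition traversal :: "'i set \<Rightarrow> ('i \<Rightarrow> 'v graph) \<Rightarrow> 'j graph \<Rightarrow> ('i \<Rightarrow> 'j \<Rightarrow> 'v)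
    \<Rightarrow> 'i \<Rightarrow> 'v set \<Rightarrow> bool" where
  "traversal I G J \<iota> i T \<longleftrightarrow> par_resolving I G J \<iota> i T \<and>
     (\<forall>T'. par_resolving I G J \<iota> i T' \<longrightarrow> card T \<le> card T')"

end

theory Submission
  imports Defs
begin

text \<open>Each \<open>G\<^sub>i\<close> sits isometrically in \<open>H\<close>, and a vertex of \<open>G\<^sub>k - J\<^sub>k\<close> reaches a vertex
  \<open>u\<close> of \<open>G\<^sub>i - J\<^sub>i\<close> (\<open>k \<noteq> i\<close>) only through \<open>J\<close>, at distance \<open>min\<^sub>x d(w,x\<^sup>k) + d(x\<^sup>i,u)\<close>.
  Both facts follow by comparing \<open>d\<^sub>H\<close> with a potential that is 1-Lipschitz along
  the edges of \<open>H\<close>. Consequently an edge of \<open>\<parallel>(J\<^sub>i:G\<^sub>i)\<close> can only be distinguished by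
  vertices of \<open>G\<^sub>i - J\<^sub>i\<close>: an edge resolving set of \<open>H\<close> meets each \<open>G\<^sub>i - J\<^sub>i\<close> in a set
  at least as large as a traversal, hence as \<open>dim\<^sub>l(G\<^sub>i)\<close> by hypothesis. Conversely the
  union of local metric bases of the \<open>G\<^sub>i\<close> resolves \<open>H\<close>, since every edge of \<open>H\<close> is
  an edge of some \<open>G\<^sub>i\<close> and distances inside \<open>G\<^sub>i\<close> are preserved.\<close>

section \<open>Walks and distances\<close>

lemma walk_Cons_Cons:
  "walk G (x # y # xs) \<longleftrightarrow> x \<in> verts G \<and> (x, y) \<in> edges G \<and> walk G (y # xs)"
proof -
  have "(\<forall>k. Suc k < length (x # y # xs) \<longrightarrow> ((x # y # xs) ! k, (x # y # xs) ! Suc k) \<in> edges G)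
    \<longleftrightarrow> (x, y) \<in> edges G \<and>
        (\<forall>k. Suc k < length (y # xs) \<longrightarrow> ((y # xs) ! k, (y # xs) ! Suc k) \<in> edges G)"
    by (metis (no_types, lifting) Suc_less_eq length_Cons nth_Cons_0 nth_Cons_Suc not0_implies_Suc zero_less_Suc)
  then show ?thesis
    unfolding walk_def by auto
qed

lemma walk_append:
  "walk G xs \<Longrightarrow> walk G ys \<Longrightarrow> last xs = hd ys \<Longrightarrow> walk G (xs @ tl ys)"
proof (induction xs rule: induct_list012)
  case 1
  then show ?case by (simp add: walk_def)
next
  case (2 x)
  then show ?case by (cases ys) auto
next
  case (3 x y zs)
  then show ?case by (simp add: walk_Cons_Cons)
qed

lemma dist_le_length_walk:
  "walk G xs \<Longrightarrow> hd xs = u \<Longrightarrow> last xs = v \<Longrightarrow> dist G u v \<le> enat (length xs - 1)"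
  unfolding dist_def by (rule INF_lower) auto

lemma dist_attained:
  assumes "dist G u v \<noteq> \<infinity>"
  obtains xs where "walk G xs" "hd xs = u" "last xs = v" "dist G u v = enat (length xs - 1)"
proof -
  let ?W = "{xs. walk G xs \<and> hd xs = u \<and> last xs = v}"
  have "?W \<noteq> {}"
  proof
    assume "?W = {}"
    then have "dist G u v = \<infinity>"
      unfolding dist_def by (simp only: image_empty Inf_empty top_enat_def)
    then show False
      using assms by simp
  qed
  then have "dist G u v \<in> (\<lambda>xs. enat (length xs - 1)) ` ?W"
    unfolding dist_def by (auto intro: wellorder_InfI)
  then show thesis
    using that by blast
qed

lemma dist_self: "u \<in> verts G \<Longrightarrow> dist G u u = 0"
  using dist_le_length_walk[of G "[u]"] by (simp add: walk_def zero_enat_def[symmetric])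

lemma dist_eq_0_imp_eq:
  assumes "dist G u v = 0"
  shows "u = v"
proof -
  have "dist G u v \<noteq> \<infinity>"
    using assms by simp
  then obtain xs where xs: "walk G xs" "hd xs = u" "last xs = v" "dist G u v = enat (length xs - 1)"
    by (rule dist_attained)
  then have "length xs - 1 = 0"
    using assms by (simp add: zero_enat_def)
  then obtain a where "xs = [a]"
    using xs(1) by (cases xs) (auto simp: walk_def)
  then show ?thesis
    using xs by simp
qed

lemma dist_le_1_if_edge:
  "(u, v) \<in> edges G \<Longrightarrow> u \<in> verts G \<Longrightarrow> v \<in> verts G \<Longrightarrow> dist G u v \<le> 1"
  using dist_le_length_walk[of G "[u, v]"] by (simp add: walk_Cons_Cons walk_def one_enat_def)

lemma dist_triangle: "dist G u w \<le> dist G u v + dist G v w"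
proof (cases "dist G u v = \<infinity> \<or> dist G v w = \<infinity>")
  case True
  then show ?thesis by auto
next
  case False
  then obtain xs ys
    where xs: "walk G xs" "hd xs = u" "last xs = v" "dist G u v = enat (length xs - 1)"
      and ys: "walk G ys" "hd ys = v" "last ys = w" "dist G v w = enat (length ys - 1)"
    using dist_attained by metis
  have ne: "xs \<noteq> []" "ys \<noteq> []"
    using xs ys by (auto simp: walk_def)
  have "last (xs @ tl ys) = w"
    using ne xs ys by (cases ys) auto
  then have "dist G u w \<le> enat (length (xs @ tl ys) - 1)"
    using walk_append[OF xs(1) ys(1)] xs ys ne by (intro dist_le_length_walk) auto
  also have "\<dots> = dist G u v + dist G v w"
    using xs ys ne by (cases xs; cases ys) auto
  finally show ?thesis .
qed

lemma lipschitz_along_walk: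
  assumes "walk G xs" and "\<And>y y'. (y, y') \<in> edges G \<Longrightarrow> f y' \<le> f y + (1 :: enat)"
  shows "f (last xs) \<le> f (hd xs) + enat (length xs - 1)"
  using assms(1)
proof (induction xs rule: induct_list012)
  case 1
  then show ?case by (simp add: walk_def)
next
  case (2 x)
  then show ?case by simp
next
  case (3 x y zs)
  then have "(x, y) \<in> edges G" and "walk G (y # zs)"
    by (auto simp: walk_Cons_Cons)
  then have "f (last (y # zs)) \<le> f y + enat (length zs)" and "f y \<le> f x + 1"
    using 3 assms(2) by auto
  then have "f (last (y # zs)) \<le> f x + 1 + enat (length zs)"
    by (metis add_right_mono order_trans)
  then show ?case
    by (simp add: one_enat_def add.assoc)
qed

lemma lipschitz_le_dist:
  assumes "\<And>y y'. (y, y') \<in> edges G \<Longrightarrow> f y' \<le> f y + (1 :: enat)" and "f u = 0"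
  shows "f v \<le> dist G u v"
  unfolding dist_def
proof (rule INF_greatest)
  fix xs
  assume "xs \<in> {xs. walk G xs \<and> hd xs = u \<and> last xs = v}"
  then show "f v \<le> enat (length xs - 1)"
    using lipschitz_along_walk[of G xs f] assms by auto
qed

lemma edge_resolving_verts:
  assumes "wf_graph G"
  shows "edge_resolving G (verts G)"
  unfolding edge_resolving_def
proof (intro conjI subset_refl ballI, clarify)
  fix u v
  assume uv: "(u, v) \<in> edges G"
  then have "u \<in> verts G" "u \<noteq> v"
    using assms by (auto simp: wf_graph_def irrefl_def)
  then show "\<exists>w\<in>verts G. dist G w u \<noteq> dist G w v"
    using dist_self dist_eq_0_imp_eq by metis
qed

lemma local_metric_basis_exists:
  assumes "wf_graph G"
  obtains B where "local_metric_basis G B"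
  using ex_has_least_nat[of "edge_resolving G" "verts G" card] edge_resolving_verts[OF assms] that
  unfolding local_metric_basis_def by blast

lemma local_dim_eq_card: "local_metric_basis G B \<Longrightarrow> local_dim G = card B"
  unfolding local_dim_def local_metric_basis_def by (rule Least_equality) auto

lemma local_dim_eqI:
  assumes "edge_resolving G S" "card S \<le> k" "\<And>S. edge_resolving G S \<Longrightarrow> k \<le> card S"
  shows "local_dim G = k"
  unfolding local_dim_def
  by (rule Least_equality) (use assms le_antisym in blast)+

section \<open>Distances in the amalgamation\<close>

locale amalgamation =
  fixes I :: "'i set" and G :: "'i \<Rightarrow> 'v graph" and J :: "'j graph"
    and \<iota> :: "'i \<Rightarrow> 'j \<Rightarrow> 'v"
  assumes finite_I: "finite I"
    and wf_G: "\<And>i. i \<in> I \<Longrightarrow> wf_graph (G i)"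
    and induced: "\<And>i. i \<in> I \<Longrightarrow> induced_embedding J (G i) (\<iota> i)"
    and isometric: "isometric_family I G J \<iota>"
begin

abbreviation "H \<equiv> amalg I G J \<iota>"
abbreviation "e \<equiv> emb J \<iota>"

lemma iota_in_verts: "i \<in> I \<Longrightarrow> x \<in> verts J \<Longrightarrow> \<iota> i x \<in> verts (G i)"
  using induced by (auto simp: induced_embedding_def)

lemma emb_iota: "i \<in> I \<Longrightarrow> x \<in> verts J \<Longrightarrow> e i (\<iota> i x) = Inl x"
  using induced by (auto simp: emb_def induced_embedding_def)

lemma emb_outside: "v \<notin> \<iota> i ` verts J \<Longrightarrow> e i v = Inr (i, v)"
  by (simp add: emb_def)

lemma edge_in_verts: "i \<in> I \<Longrightarrow> (u, v) \<in> edges (G i) \<Longrightarrow> u \<in> verts (G i) \<and> v \<in> verts (G i)"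
  using wf_G by (auto simp: wf_graph_def)

lemma verts_amalg: "verts H = (\<Union>i\<in>I. e i ` verts (G i))"
  by (simp add: amalg_def verts_def)

lemma edges_amalg_iff:
  "(y, y') \<in> edges H \<longleftrightarrow> (\<exists>i\<in>I. \<exists>u v. (u, v) \<in> edges (G i) \<and> y = e i u \<and> y' = e i v)"
  by (auto simp: amalg_def edges_def)

lemma finite_verts_amalg: "finite (verts H)"
  using finite_I wf_G by (auto simp: verts_amalg wf_graph_def)

lemma dist_amalg_le: "i \<in> I \<Longrightarrow> dist H (e i a) (e i b) \<le> dist (G i) a b"
proof (cases "dist (G i) a b = \<infinity>")
  case False
  assume i: "i \<in> I"
  obtain xs where xs: "walk (G i) xs" "hd xs = a" "last xs = b" "dist (G i) a b = enat (length xs - 1)"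
    using False dist_attained by metis
  have "walk H (map (e i) xs)"
    using xs(1) i unfolding walk_def edges_amalg_iff verts_amalg by (auto 0 4)
  moreover have "xs \<noteq> []"
    using xs(1) by (simp add: walk_def)
  ultimately show ?thesis
    using dist_le_length_walk[of H "map (e i) xs"] xs by (simp add: hd_map last_map)
qed simp

text \<open>The candidate for \<open>d\<^sub>H(a, v)\<close> when \<open>a\<close> lies in \<open>G\<^sub>k\<close> and \<open>v\<close> in \<open>G\<^sub>j\<close>, \<open>j \<noteq> k\<close>.\<close>

definition dist_through_J :: "'i \<Rightarrow> 'v \<Rightarrow> 'i \<Rightarrow> 'v \<Rightarrow> enat" where
  "dist_through_J k a j v = (INF x\<in>verts J. dist (G k) a (\<iota> k x) + dist (G j) (\<iota> j x) v)"

definition potential :: "'i \<Rightarrow> 'v \<Rightarrow> 'j + 'i \<times> 'v \<Rightarrow> enat" where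
  "potential k a y = (case y of
       Inl x \<Rightarrow> dist (G k) a (\<iota> k x)
     | Inr (j, v) \<Rightarrow> if j = k then dist (G k) a v else dist_through_J k a j v)"

lemma dist_through_J_iota:
  assumes "k \<in> I" "j \<in> I" "x\<^sub>0 \<in> verts J"
  shows "dist_through_J k a j (\<iota> j x\<^sub>0) = dist (G k) a (\<iota> k x\<^sub>0)"
proof (rule antisym)
  show "dist_through_J k a j (\<iota> j x\<^sub>0) \<le> dist (G k) a (\<iota> k x\<^sub>0)"
    using INF_lower[OF assms(3), of "\<lambda>x. dist (G k) a (\<iota> k x) + dist (G j) (\<iota> j x) (\<iota> j x\<^sub>0)"]
      dist_self[OF iota_in_verts[OF assms(2,3)]]
    by (simp add: dist_through_J_def)
  show "dist (G k) a (\<iota> k x\<^sub>0) \<le> dist_through_J k a j (\<iota> j x\<^sub>0)"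
    unfolding dist_through_J_def
  proof (rule INF_greatest)
    fix x
    assume "x \<in> verts J"
    then have "dist (G j) (\<iota> j x) (\<iota> j x\<^sub>0) = dist (G k) (\<iota> k x) (\<iota> k x\<^sub>0)"
      using isometric assms unfolding isometric_family_def by blast
    then show "dist (G k) a (\<iota> k x\<^sub>0) \<le> dist (G k) a (\<iota> k x) + dist (G j) (\<iota> j x) (\<iota> j x\<^sub>0)"
      by (simp add: dist_triangle)
  qed
qed

lemma dist_through_J_triangle:
  "dist_through_J k a j v \<le> dist_through_J k a j u + dist (G j) u v"
proof (cases "verts J = {}")
  case True
  then show ?thesis by (simp add: dist_through_J_def top_enat_def)
next
  case False
  then obtain x where x: "x \<in> verts J"
    and u: "dist_through_J k a j u = dist (G k) a (\<iota> k x) + dist (G j) (\<iota> j x) u"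
    unfolding dist_through_J_def by (metis (no_types, lifting) ex_in_conv imageE wellorder_InfI imageI)
  have "dist_through_J k a j v \<le> dist (G k) a (\<iota> k x) + dist (G j) (\<iota> j x) v"
    unfolding dist_through_J_def using x by (rule INF_lower)
  also have "\<dots> \<le> dist (G k) a (\<iota> k x) + (dist (G j) (\<iota> j x) u + dist (G j) u v)"
    by (intro add_left_mono dist_triangle)
  finally show ?thesis
    by (simp add: u add.assoc)
qed

lemma potential_emb:
  assumes "k \<in> I" "j \<in> I" "y \<in> verts (G j)"
  shows "potential k a (e j y) = (if j = k then dist (G k) a y else dist_through_J k a j y)"
proof (cases "y \<in> \<iota> j ` verts J")
  case True
  then obtain x where "x \<in> verts J" "y = \<iota> j x"
    by blast
  then show ?thesis
    using emb_iota dist_through_J_iota assms by (simp add: potential_def)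
next
  case False
  then show ?thesis
    by (simp add: emb_outside potential_def)
qed

lemma potential_edge:
  assumes "k \<in> I" "(y, y') \<in> edges H"
  shows "potential k a y' \<le> potential k a y + 1"
proof -
  obtain j u v where j: "j \<in> I" "(u, v) \<in> edges (G j)" "y = e j u" "y' = e j v"
    using assms(2) edges_amalg_iff by blast
  have uv: "u \<in> verts (G j)" "v \<in> verts (G j)"
    using edge_in_verts j by auto
  have d: "dist (G j) u v \<le> 1"
    using dist_le_1_if_edge j(2) uv .
  have "dist (G j) a v \<le> dist (G j) a u + 1"
    using dist_triangle[of "G j" a v u] add_left_mono[OF d] order_trans by blast
  moreover have "dist_through_J k a j v \<le> dist_through_J k a j u + 1"
    using dist_through_J_triangle[of k a j v u] add_left_mono[OF d] order_trans by blast
  ultimately show ?thesis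
    using j uv potential_emb[OF assms(1) j(1)] by auto
qed

lemma potential_le_dist_amalg:
  "k \<in> I \<Longrightarrow> a \<in> verts (G k) \<Longrightarrow> potential k a y \<le> dist H (e k a) y"
  by (rule lipschitz_le_dist) (auto simp: potential_edge potential_emb dist_self)

lemma dist_amalg_emb:
  assumes "i \<in> I" "a \<in> verts (G i)" "b \<in> verts (G i)"
  shows "dist H (e i a) (e i b) = dist (G i) a b"
  using dist_amalg_le[OF assms(1)] potential_le_dist_amalg[OF assms(1,2), of "e i b"]
    potential_emb[OF assms(1,1,3)]
  by (simp add: antisym)

lemma dist_amalg_cross:
  assumes "i \<in> I" "k \<in> I" "k \<noteq> i" "w \<in> verts (G k)" "u \<in> verts (G i)"
  shows "dist H (e k w) (e i u) = dist_through_J k w i u"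
proof (rule antisym)
  show "dist H (e k w) (e i u) \<le> dist_through_J k w i u"
    unfolding dist_through_J_def
  proof (rule INF_greatest)
    fix x
    assume x: "x \<in> verts J"
    have "dist H (e k w) (e i u) \<le> dist H (e k w) (e k (\<iota> k x)) + dist H (e i (\<iota> i x)) (e i u)"
      using dist_triangle emb_iota[OF assms(1) x] emb_iota[OF assms(2) x] by metis
    then show "dist H (e k w) (e i u) \<le> dist (G k) w (\<iota> k x) + dist (G i) (\<iota> i x) u"
      using assms x by (simp add: dist_amalg_emb iota_in_verts)
  qed
  show "dist_through_J k w i u \<le> dist H (e k w) (e i u)"
    using potential_le_dist_amalg[OF assms(2,4), of "e i u"] potential_emb[OF assms(2,1,5)] assms(3)
    by simp
qed

section \<open>The local dimension of the amalgamation\<close>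

lemma edge_resolving_amalg_Union:
  assumes "\<And>i. i \<in> I \<Longrightarrow> edge_resolving (G i) (B i)"
  shows "edge_resolving H (\<Union>i\<in>I. e i ` B i)"
  unfolding edge_resolving_def
proof (intro conjI ballI)
  show "(\<Union>i\<in>I. e i ` B i) \<subseteq> verts H"
    using assms by (auto simp: verts_amalg edge_resolving_def)
next
  fix p
  assume "p \<in> edges H"
  then obtain j u v where j: "j \<in> I" "(u, v) \<in> edges (G j)" "p = (e j u, e j v)"
    using edges_amalg_iff by (cases p) blast
  then obtain w where w: "w \<in> B j" "dist (G j) w u \<noteq> dist (G j) w v"
    using assms by (fastforce simp: edge_resolving_def)
  then have "dist H (e j w) (e j u) \<noteq> dist H (e j w) (e j v)"
    using assms[OF j(1)] edge_in_verts[OF j(1,2)] by (auto simp: dist_amalg_emb[OF j(1)] edge_resolving_def)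
  then show "case p of (u, v) \<Rightarrow> \<exists>w\<in>\<Union>i\<in>I. e i ` B i. dist H w u \<noteq> dist H w v"
    using j w by auto
qed

lemma edge_resolving_amalg_card_le:
  obtains S where "edge_resolving H S" "card S \<le> (\<Sum>i\<in>I. local_dim (G i))"
proof -
  have "\<forall>i\<in>I. \<exists>B. local_metric_basis (G i) B"
    using local_metric_basis_exists wf_G by metis
  then obtain B where B: "\<And>i. i \<in> I \<Longrightarrow> local_metric_basis (G i) (B i)"
    by metis
  have "edge_resolving H (\<Union>i\<in>I. e i ` B i)"
    using B by (intro edge_resolving_amalg_Union) (simp add: local_metric_basis_def)
  moreover have "card (\<Union>i\<in>I. e i ` B i) \<le> (\<Sum>i\<in>I. local_dim (G i))"
  proof -
    have "card (\<Union>i\<in>I. e i ` B i) \<le> (\<Sum>i\<in>I. card (e i ` B i))"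
      using finite_I by (rule card_UN_le)
    also have "\<dots> \<le> (\<Sum>i\<in>I. card (B i))"
      by (intro sum_mono card_image_le) (meson B wf_G edge_resolving_def local_metric_basis_def
          wf_graph_def finite_subset)
    also have "\<dots> = (\<Sum>i\<in>I. local_dim (G i))"
      using local_dim_eq_card[OF B] by (intro sum.cong) auto
    finally show ?thesis .
  qed
  ultimately show thesis
    by (rule that)
qed

lemma traversal_exists:
  assumes i: "i \<in> I"
  obtains T where "traversal I G J \<iota> i T"
proof -
  have "par_resolving I G J \<iota> i (verts (G i) - \<iota> i ` verts J)"
    unfolding par_resolving_def
  proof (intro conjI subset_refl ballI, clarify)
    fix u v
    assume "(u, v) \<in> parallel_edges (G i) (\<iota> i ` verts J)"
    then have uv: "(u, v) \<in> edges (G i)" "u \<notin> \<iota> i ` verts J"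
      by (auto simp: parallel_edges_def)
    then have "u \<in> verts (G i)" "v \<in> verts (G i)" "u \<noteq> v"
      using edge_in_verts[OF i] wf_G[OF i] by (auto simp: wf_graph_def irrefl_def)
    then have "dist H (e i u) (e i u) \<noteq> dist H (e i u) (e i v)"
      using i by (metis dist_amalg_emb dist_self dist_eq_0_imp_eq)
    then show "\<exists>w\<in>verts (G i) - \<iota> i ` verts J. dist H (e i w) (e i u) \<noteq> dist H (e i w) (e i v)"
      using \<open>u \<in> verts (G i)\<close> uv(2) by blast
  qed
  then show thesis
    using ex_has_least_nat[of "par_resolving I G J \<iota> i"] that unfolding traversal_def by blast
qed

text \<open>Vertices of \<open>J\<close> and of the other \<open>G\<^sub>k\<close> see both ends of a parallel edge at the
  same distance, because they see \<open>G\<^sub>i - J\<^sub>i\<close> only through \<open>J\<^sub>i\<close>.\<close>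

lemma parallel_edge_distinguished_outside_J:
  assumes i: "i \<in> I" and par: "(u, v) \<in> parallel_edges (G i) (\<iota> i ` verts J)"
    and w: "w \<in> verts H" "dist H w (e i u) \<noteq> dist H w (e i v)"
  obtains w' where "w = Inr (i, w')" "w' \<in> verts (G i) - \<iota> i ` verts J"
proof -
  have uv: "(u, v) \<in> edges (G i)" "u \<in> verts (G i)" "v \<in> verts (G i)"
    and same: "\<And>x. x \<in> verts J \<Longrightarrow> dist (G i) (\<iota> i x) u = dist (G i) (\<iota> i x) v"
    using par edge_in_verts[OF i] by (auto simp: parallel_edges_def)
  obtain k w' where k: "k \<in> I" "w' \<in> verts (G k)" "w = e k w'"
    using w(1) verts_amalg by blast
  have outside: "w' \<notin> \<iota> k ` verts J"
  proof
    assume "w' \<in> \<iota> k ` verts J"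
    then obtain x where x: "x \<in> verts J" "w = e i (\<iota> i x)"
      using k i by (auto simp: emb_iota)
    then show False
      using w(2) same[OF x(1)] i uv by (simp add: dist_amalg_emb iota_in_verts)
  qed
  have "k = i"
  proof (rule ccontr)
    assume "k \<noteq> i"
    moreover have "dist_through_J k w' i u = dist_through_J k w' i v"
      using same by (simp add: dist_through_J_def)
    ultimately show False
      using w(2) k i uv by (simp add: dist_amalg_cross)
  qed
  then show thesis
    using that k outside by (simp add: emb_outside)
qed

definition local_part :: "('j + 'i \<times> 'v) set \<Rightarrow> 'i \<Rightarrow> 'v set" where
  "local_part S i = {v \<in> verts (G i) - \<iota> i ` verts J. Inr (i, v) \<in> S}"

lemma par_resolving_local_part:
  assumes "i \<in> I" "edge_resolving H S"
  shows "par_resolving I G J \<iota> i (local_part S i)"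
  unfolding par_resolving_def
proof (intro conjI ballI, fastforce simp: local_part_def, clarify)
  fix u v
  assume par: "(u, v) \<in> parallel_edges (G i) (\<iota> i ` verts J)"
  then have "(e i u, e i v) \<in> edges H"
    using assms(1) edges_amalg_iff by (auto simp: parallel_edges_def)
  then obtain w where w: "w \<in> S" "dist H w (e i u) \<noteq> dist H w (e i v)"
    using assms(2) by (fastforce simp: edge_resolving_def)
  moreover have "w \<in> verts H"
    using w(1) assms(2) by (auto simp: edge_resolving_def)
  ultimately obtain w' where "w = Inr (i, w')" "w' \<in> verts (G i) - \<iota> i ` verts J"
    using parallel_edge_distinguished_outside_J[OF assms(1) par] by blast
  then show "\<exists>w'\<in>local_part S i. dist H (e i w') (e i u) \<noteq> dist H (e i w') (e i v)"
    using w by (auto simp: local_part_def emb_outside)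
qed

lemma sum_card_local_part_le:
  assumes "finite S"
  shows "(\<Sum>i\<in>I. card (local_part S i)) \<le> card S"
proof -
  have "finite (local_part S i)" if "i \<in> I" for i
    using wf_G[OF that] by (auto simp: local_part_def wf_graph_def)
  then have "(\<Sum>i\<in>I. card (local_part S i)) = card (Sigma I (local_part S))"
    using finite_I by simp
  also have "\<dots> \<le> card S"
    using assms by (intro card_inj_on_le[of Inr]) (auto simp: local_part_def)
  finally show ?thesis .
qed

lemma local_dim_le_card_par_resolving:
  assumes i: "i \<in> I"
    and traversal_basis: "\<And>T. traversal I G J \<iota> i T \<Longrightarrow> \<exists>B\<subseteq>T. local_metric_basis (G i) B"
    and U: "par_resolving I G J \<iota> i U"
  shows "local_dim (G i) \<le> card U"
proof -
  obtain T where T: "traversal I G J \<iota> i T"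
    using traversal_exists[OF i] .
  then obtain B where B: "B \<subseteq> T" "local_metric_basis (G i) B"
    using traversal_basis by blast
  have "finite T"
    using T wf_G[OF i] by (auto simp: traversal_def par_resolving_def wf_graph_def intro: finite_subset)
  then have "local_dim (G i) \<le> card T"
    using B by (simp add: local_dim_eq_card card_mono)
  also have "\<dots> \<le> card U"
    using T U by (simp add: traversal_def)
  finally show ?thesis .
qed

lemma sum_local_dim_le_card_edge_resolving:
  assumes "\<And>i T. i \<in> I \<Longrightarrow> traversal I G J \<iota> i T \<Longrightarrow> \<exists>B\<subseteq>T. local_metric_basis (G i) B"
    and S: "edge_resolving H S"
  shows "(\<Sum>i\<in>I. local_dim (G i)) \<le> card S"
proof -
  have "(\<Sum>i\<in>I. local_dim (G i)) \<le> (\<Sum>i\<in>I. card (local_part S i))"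
    using assms by (intro sum_mono local_dim_le_card_par_resolving par_resolving_local_part)
  also have "\<dots> \<le> card S"
    using S finite_verts_amalg
    by (intro sum_card_local_part_le) (auto simp: edge_resolving_def intro: finite_subset)
  finally show ?thesis .
qed

end

theorem lemma7:
  fixes I :: "'i set" and G :: "'i \<Rightarrow> 'v graph" and J :: "'j graph"
    and \<iota> :: "'i \<Rightarrow> 'j \<Rightarrow> 'v"
  assumes "finite I"
    and "wf_graph J"
    and "\<And>i. i \<in> I \<Longrightarrow> wf_graph (G i)"
    and "\<And>i. i \<in> I \<Longrightarrow> connected_graph (G i)"
    and "\<And>i. i \<in> I \<Longrightarrow> induced_embedding J (G i) (\<iota> i)"
    and "isometric_family I G J \<iota>"
    and "\<And>i T. i \<in> I \<Longrightarrow> traversal I G J \<iota> i T \<Longrightarrow>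
           \<exists>B\<subseteq>T. local_metric_basis (G i) B"
  shows "local_dim (amalg I G J \<iota>) = (\<Sum>i\<in>I. local_dim (G i))"
proof -
  interpret amalgamation I G J \<iota>
    using assms(1,3,5,6) by unfold_locales
  obtain S where "edge_resolving H S" "card S \<le> (\<Sum>i\<in>I. local_dim (G i))"
    by (rule edge_resolving_amalg_card_le)
  then show ?thesis
    using sum_local_dim_le_card_edge_resolving[OF assms(7)] by (rule local_dim_eqI)
qed

end
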